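(* Let $p$ be a prime and $q = 2^p$. Then $|\mathrm{Solv}(\mathrm{PSL}(2, q))| = 2q^2$.
   Context: For a finite group $G$ and $x \in G$, the solvabilizer of $x$ in $G$ is $\mathrm{Sol}_G(x) = \{y \in G : \langle x, y \rangle \text{ is solvable}\}$. $\mathrm{Solv}(G) = \{\mathrm{Sol}_G(x) : x \in G\}$ is the set of distinct solvabilizers of elements of $G$, and $|\mathrm{Solv}(G)|$ is its cardinality. *)

theory Defs
  imports "HOL-Computational_Algebra.Primes" "HOL-Analysis.Determinants" "HOL-Algebra.Solvable_Groups"
begin

definition SL2 :: "'a::field itself \<Rightarrow> ('a^2^2) monoid" where
  "SL2 _ = \<lparr>carrier = {A :: 'a^2^2. det A = 1}, mult = (\<lambda>A B. A ** B), one = mat 1\<rparr>"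

definition SL2_scalars :: "'a::field itself \<Rightarrow> ('a^2^2) set" where
  "SL2_scalars T = {A. A \<in> carrier (SL2 T) \<and> (\<exists>c::'a. A = mat c)}"

definition PSL2 :: "'a::field itself \<Rightarrow> ('a^2^2) set monoid" where
  "PSL2 T = SL2 T Mod SL2_scalars T"

definition Sol :: "('g, 'b) monoid_scheme \<Rightarrow> 'g \<Rightarrow> 'g set" where
  "Sol G x = {y \<in> carrier G. solvable (subgroup_generated G {x, y})}"

definition Solv :: "('g, 'b) monoid_scheme \<Rightarrow> 'g set set" where
  "Solv G = Sol G ` carrier G"

end

(*
  In characteristic 2 the only scalar matrix of determinant 1 is the identity, so
  PSL(2,q) = SL(2,q). Over a field F of characteristic 2, two elements x, y of SL(2,F)
  generate a solvable group iff they have a common eigenvector (a common Borel subgroup) or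
  both normalise the algebra F[m] for some m of trace 1 (whose elements of determinant 1
  form a maximal torus, with dihedral normaliser). Both kinds of subgroup are metabelian.
  Conversely, the last nontrivial term of the derived series of <x, y> contains some a other
  than the identity commuting with all its conjugates, so x and y normalise F[a]; if a is
  unipotent they fix its fixed line, otherwise F[a] is a torus.

  Hence the solvabilizer of 1 is everything, an involution (that is, a transvection) is
  determined by its solvabilizer, and the solvabilizer of any other x is determined by its
  centraliser F[x], that is, by the off-diagonal entries of x divided by its trace. For
  q > 2 all these data occur and give distinct solvabilizers: 1 + (q^2 - 1) + q^2 = 2q^2.
*)

theory Submission
  imports Defs "HOL-Number_Theory.Residues"
begin

section \<open>2 \<times> 2 matrices over a field\<close>

definition mat2 :: "'a::zero \<Rightarrow> 'a \<Rightarrow> 'a \<Rightarrow> 'a \<Rightarrow> 'a^2^2" where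
  "mat2 a b c d = (\<chi> i j. if i = 1 then (if j = 1 then a else b) else (if j = 1 then c else d))"

definition vec2 :: "'a \<Rightarrow> 'a \<Rightarrow> 'a^2" where
  "vec2 x y = (\<chi> i. if i = 1 then x else y)"

lemma mat2_nth [simp]:
  "mat2 a b c d $ 1 $ 1 = a" "mat2 a b c d $ 1 $ 2 = b" "mat2 a b c d $ 2 $ 1 = c" "mat2 a b c d $ 2 $ 2 = d"
  by (simp_all add: mat2_def)

lemma vec2_nth [simp]: "vec2 x y $ 1 = x" "vec2 x y $ 2 = y"
  by (simp_all add: vec2_def)

lemma mat2_cases:
  fixes A :: "'a::zero^2^2"
  obtains a b c d where "A = mat2 a b c d"
proof
  show "A = mat2 (A$1$1) (A$1$2) (A$2$1) (A$2$2)"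
    by (simp add: vec_eq_iff forall_2)
qed

lemma vec2_cases:
  fixes v :: "'a^2"
  obtains x y where "v = vec2 x y"
proof
  show "v = vec2 (v$1) (v$2)"
    by (simp add: vec_eq_iff forall_2)
qed

lemma mat2_eq_iff [simp]: "mat2 a b c d = mat2 a' b' c' d' \<longleftrightarrow> a = a' \<and> b = b' \<and> c = c' \<and> d = d'"
  by (simp add: vec_eq_iff forall_2 mat2_def)

lemma vec2_eq_iff [simp]: "vec2 x y = vec2 x' y' \<longleftrightarrow> x = x' \<and> y = y'"
  by (simp add: vec_eq_iff forall_2 vec2_def)

lemma mat2_eq_0_iff [simp]: "mat2 a b c d = 0 \<longleftrightarrow> a = 0 \<and> b = 0 \<and> c = 0 \<and> d = 0"
  by (simp add: vec_eq_iff forall_2 mat2_def)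

lemma vec2_eq_0_iff [simp]: "vec2 x y = 0 \<longleftrightarrow> x = 0 \<and> y = 0"
  by (simp add: vec_eq_iff forall_2)

lemma mat_eq_mat2: "mat x = mat2 x 0 0 x"
  by (simp add: vec_eq_iff forall_2 mat_def)

lemma mat2_add [simp]: "mat2 a b c d + mat2 a' b' c' d' = mat2 (a + a') (b + b') (c + c') (d + d')"
  by (simp add: vec_eq_iff forall_2)

lemma vec2_add [simp]: "vec2 x y + vec2 x' y' = vec2 (x + x') (y + y')"
  by (simp add: vec_eq_iff forall_2)

lemma vec2_smult [simp]: "k *s vec2 x y = vec2 (k * x) (k * y)"
  by (simp add: vec_eq_iff forall_2)

lemma mat2_mult [simp]:
  "mat2 a b c d ** mat2 a' b' c' d' = mat2 (a*a' + b*c') (a*b' + b*d') (c*a' + d*c') (c*b' + d*d')"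
  by (simp add: vec_eq_iff forall_2 matrix_matrix_mult_def sum_2)

lemma mat2_mulv [simp]: "mat2 a b c d *v vec2 x y = vec2 (a*x + b*y) (c*x + d*y)"
  by (simp add: vec_eq_iff forall_2 matrix_vector_mult_def sum_2)

lemma det_mat2 [simp]: "det (mat2 a b c d) = a*d - b*c"
  by (simp add: det_2)

lemma trace_mat2 [simp]: "trace (mat2 a b c d) = a + d"
  by (simp add: trace_def sum_2)

lemma matrix_add_rdistrib: "(A + B) ** C = A ** C + B ** C"
  by (vector matrix_matrix_mult_def sum.distrib[symmetric] field_simps)

lemma mat_commute: "A ** mat c = mat c ** A" for A :: "'a::comm_ring_1^2^2"
  by (cases A rule: mat2_cases) (simp add: mat_eq_mat2 mult.commute)

lemma mat_add_mat: "mat a + mat b = (mat (a + b) :: 'a::semiring_1^'n^'n)"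
  by (vector mat_def)

lemma mat_mult_cancel: "c \<noteq> 0 \<Longrightarrow> mat c ** A = mat c ** B \<Longrightarrow> A = B"
  for A B :: "'a::field^2^2"
  by (cases A rule: mat2_cases, cases B rule: mat2_cases) (simp add: mat_eq_mat2)

lemma mat_mulv: "mat c *v v = c *s v" for v :: "'a::comm_ring_1^2"
  by (cases v rule: vec2_cases) (simp add: mat_eq_mat2)

lemma trace_linear: "trace (mat \<alpha> ** m + mat \<beta>) = \<alpha> * trace m + 2 * \<beta>"
  for m :: "'a::comm_ring_1^2^2"
  by (cases m rule: mat2_cases) (simp add: mat_eq_mat2 algebra_simps)

lemma det_linear: "det (mat \<alpha> ** m + mat \<beta>) = \<alpha> * \<alpha> * det m + \<alpha> * \<beta> * trace m + \<beta> * \<beta>"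
  for m :: "'a::comm_ring_1^2^2"
  by (cases m rule: mat2_cases) (simp add: mat_eq_mat2 algebra_simps)

lemma linear_mulv: "(mat \<alpha> ** m + mat \<beta>) *v w = \<alpha> *s (m *v w) + \<beta> *s w"
  for m :: "'a::comm_ring_1^2^2"
  by (cases m rule: mat2_cases, cases w rule: vec2_cases) (simp add: mat_eq_mat2 algebra_simps)

definition adj2 :: "'a::comm_ring_1^2^2 \<Rightarrow> 'a^2^2" where
  "adj2 A = mat2 (A$2$2) (- A$1$2) (- A$2$1) (A$1$1)"

lemma adj2_mat2 [simp]: "adj2 (mat2 a b c d) = mat2 d (- b) (- c) a"
  by (simp add: adj2_def)

lemma det_adj2 [simp]: "det (adj2 A) = det A"
  by (cases A rule: mat2_cases) (simp add: algebra_simps)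

lemma mult_adj2: "A ** adj2 A = mat (det A)"
  by (cases A rule: mat2_cases) (simp add: mat_eq_mat2 algebra_simps)

lemma adj2_mult: "adj2 A ** A = mat (det A)"
  by (cases A rule: mat2_cases) (simp add: mat_eq_mat2 algebra_simps)

lemma adj2_mult_distrib: "adj2 (A ** B) = adj2 B ** adj2 A"
  by (cases A rule: mat2_cases, cases B rule: mat2_cases) (simp add: algebra_simps)

lemma cayley_hamilton2: "A ** A = mat (trace A) ** A - mat (det A)" for A :: "'a::comm_ring_1^2^2"
  by (cases A rule: mat2_cases) (simp add: mat_eq_mat2 algebra_simps)

lemma det_add_mat2: "det (A + mat s) = det A + s * trace A + s * s" for A :: "'a::comm_ring_1^2^2"
  by (cases A rule: mat2_cases) (simp add: mat_eq_mat2 algebra_simps)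

lemma trace_conj_adj2: "trace (g ** m ** adj2 g) = det g * trace m"
  by (cases g rule: mat2_cases, cases m rule: mat2_cases) (simp add: algebra_simps)

lemma det_eq_0_iff_kernel:
  fixes A :: "'a::field^'n^'n"
  shows "det A = 0 \<longleftrightarrow> (\<exists>v. v \<noteq> 0 \<and> A *v v = 0)"
  using invertible_det_nz[of A] invertible_left_inverse[of A] matrix_left_invertible_ker[of A]
  by blast

definition vdet :: "'a::comm_ring_1^2 \<Rightarrow> 'a^2 \<Rightarrow> 'a" where
  "vdet u w = u$1 * w$2 - u$2 * w$1"

lemma vdet_vec2 [simp]: "vdet (vec2 x y) (vec2 x' y') = x * y' - y * x'"
  by (simp add: vdet_def)

lemma vdet_mulv: "vdet (A *v v) (A *v w) = det A * vdet v w"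
  by (cases A rule: mat2_cases, cases v rule: vec2_cases, cases w rule: vec2_cases)
    (simp add: algebra_simps)

lemma vdet_smult_left: "vdet (k *s u) w = k * vdet u w"
  by (simp add: vdet_def algebra_simps)

lemma vdet_self [simp]: "vdet w w = 0"
  by (simp add: vdet_def mult.commute)

lemma vdet_swap: "vdet u w = - vdet w u"
  by (simp add: vdet_def mult.commute)

lemma exists_vdet_ne_0:
  fixes u :: "'a::field^2"
  assumes "u \<noteq> 0"
  obtains v where "vdet u v \<noteq> 0"
proof -
  obtain a b where u: "u = vec2 a b"
    by (rule vec2_cases)
  show ?thesis
  proof (cases "a = 0")
    case True
    then show ?thesis
      using assms that[of "vec2 1 0"] by (simp add: u)
  next
    case False
    then show ?thesis
      using that[of "vec2 0 1"] by (simp add: u)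
  qed
qed

lemma kills_independent_imp_zero:
  fixes B :: "'a::field^2^2"
  assumes "B *v v = 0" "B *v w = 0" "vdet v w \<noteq> 0"
  shows "B = 0"
proof -
  obtain a b c d where B: "B = mat2 a b c d" by (rule mat2_cases)
  obtain v1 v2 where v: "v = vec2 v1 v2" by (rule vec2_cases)
  obtain w1 w2 where w: "w = vec2 w1 w2" by (rule vec2_cases)
  have e: "a * v1 + b * v2 = 0" "c * v1 + d * v2 = 0" "a * w1 + b * w2 = 0" "c * w1 + d * w2 = 0"
    using assms(1,2) by (simp_all add: B v w)
  let ?D = "v1 * w2 - v2 * w1"
  have "a * ?D = w2 * (a * v1 + b * v2) - v2 * (a * w1 + b * w2)"
       "b * ?D = v1 * (a * w1 + b * w2) - w1 * (a * v1 + b * v2)"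
       "c * ?D = w2 * (c * v1 + d * v2) - v2 * (c * w1 + d * w2)"
       "d * ?D = v1 * (c * w1 + d * w2) - w1 * (c * v1 + d * v2)"
    by (simp_all add: algebra_simps)
  then have "a * ?D = 0" "b * ?D = 0" "c * ?D = 0" "d * ?D = 0"
    by (simp_all only: e mult_zero_right diff_self)
  moreover have "?D \<noteq> 0" using assms(3) by (simp add: v w)
  ultimately show ?thesis by (simp add: B)
qed

lemma vdet_eq_0_imp_parallel:
  fixes v w :: "'a::field^2"
  assumes "vdet v w = 0" "v \<noteq> 0"
  shows "\<exists>k. w = k *s v"
proof -
  obtain v1 v2 where v: "v = vec2 v1 v2" by (rule vec2_cases)
  obtain w1 w2 where w: "w = vec2 w1 w2" by (rule vec2_cases)
  have eq: "v1 * w2 = v2 * w1" using assms(1) by (simp add: v w)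
  show ?thesis
  proof (cases "v1 = 0")
    case False
    with eq have "w = (w1 / v1) *s v"
      by (simp add: v w divide_simps mult.commute)
    then show ?thesis ..
  next
    case True
    with assms(2) have "v2 \<noteq> 0" by (simp add: v)
    with True eq have "w = (w2 / v2) *s v"
      by (simp add: v w divide_simps mult.commute)
    then show ?thesis ..
  qed
qed

lemma parallel_if_common_kernel:
  fixes B :: "'a::field^2^2"
  assumes "B \<noteq> 0" "B *v v = 0" "B *v w = 0" "v \<noteq> 0"
  shows "\<exists>k. w = k *s v"
  using assms kills_independent_imp_zero vdet_eq_0_imp_parallel by blast

lemma eq_divide_mult: "p \<noteq> 0 \<Longrightarrow> p * q = r * s \<Longrightarrow> q = s / p * r" for p :: "'a::field"
  by (simp add: field_simps)

lemma commute_nonscalar_imp_linear: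
  fixes x b :: "'a::field^2^2"
  assumes "x ** b = b ** x" and "\<nexists>c. x = mat c"
  shows "\<exists>\<alpha> \<beta>. b = mat \<alpha> ** x + mat \<beta>"
proof -
  obtain a1 a2 a3 a4 where x: "x = mat2 a1 a2 a3 a4" by (rule mat2_cases)
  obtain b1 b2 b3 b4 where b: "b = mat2 b1 b2 b3 b4" by (rule mat2_cases)
  have "a1 * b1 + a2 * b3 = b1 * a1 + b2 * a3" "a1 * b2 + a2 * b4 = b1 * a2 + b2 * a4"
       "a3 * b1 + a4 * b3 = b3 * a1 + b4 * a3"
    using assms(1) by (simp_all add: x b)
  then have e1: "a2 * b3 = a3 * b2" and e2: "a2 * (b1 - b4) = (a1 - a4) * b2"
    and e3: "a3 * (b1 - b4) = (a1 - a4) * b3"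
    by (simp_all add: algebra_simps)
  have "a2 \<noteq> 0 \<or> a3 \<noteq> 0 \<or> a1 - a4 \<noteq> 0"
  proof (rule ccontr)
    assume "\<not> ?thesis"
    then have "x = mat a1" by (simp add: x mat_eq_mat2)
    with assms(2) show False by blast
  qed
  then obtain \<alpha> where "b2 = \<alpha> * a2" "b3 = \<alpha> * a3" "b1 - b4 = \<alpha> * (a1 - a4)"
  proof (elim disjE)
    assume "a2 \<noteq> 0"
    from eq_divide_mult[OF this refl] eq_divide_mult[OF this e1] eq_divide_mult[OF this e2]
    show ?thesis by (rule that)
  next
    assume "a3 \<noteq> 0"
    from eq_divide_mult[OF this e1[symmetric]] eq_divide_mult[OF this refl] eq_divide_mult[OF this e3]
    show ?thesis by (rule that)
  next
    assume "a1 - a4 \<noteq> 0"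
    from eq_divide_mult[OF this e2[symmetric]] eq_divide_mult[OF this e3[symmetric]] eq_divide_mult[OF this refl]
    show ?thesis by (rule that)
  qed
  then have "b = mat \<alpha> ** x + mat (b1 - \<alpha> * a1)"
    by (simp add: x b mat_eq_mat2 algebra_simps)
  then show ?thesis by blast
qed

lemma commute_linear:
  fixes x :: "'a::comm_ring_1^2^2"
  shows "(mat \<alpha> ** x + mat \<beta>) ** (mat \<alpha>' ** x + mat \<beta>') = (mat \<alpha>' ** x + mat \<beta>') ** (mat \<alpha> ** x + mat \<beta>)"
  by (cases x rule: mat2_cases) (simp add: mat_eq_mat2 algebra_simps)

lemma commute_if_commute_nonscalar:
  fixes m g h :: "'a::field^2^2"
  assumes "\<nexists>c. m = mat c" and "g ** m = m ** g" and "h ** m = m ** h"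
  shows "g ** h = h ** g"
proof -
  obtain \<alpha> \<beta> \<alpha>' \<beta>' where "g = mat \<alpha> ** m + mat \<beta>" "h = mat \<alpha>' ** m + mat \<beta>'"
    using commute_nonscalar_imp_linear assms by metis
  then show ?thesis
    by (simp add: commute_linear)
qed

text \<open>The zero vector counts as an eigenvector of every matrix.\<close>

definition eigvec :: "'a::field^2^2 \<Rightarrow> 'a^2 \<Rightarrow> bool" where
  "eigvec g v \<longleftrightarrow> (\<exists>c. g *v v = c *s v)"

lemma eigvec_smult: "eigvec x v \<Longrightarrow> eigvec x (k *s v)"
  by (auto simp: eigvec_def vector_scalar_commute vector_smult_assoc mult.commute)

lemma eigvec_smult_iff: "k \<noteq> 0 \<Longrightarrow> eigvec x (k *s v) \<longleftrightarrow> eigvec x v"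
  using eigvec_smult[of x "k *s v" "inverse k"] by (auto simp: vector_smult_assoc eigvec_smult)

lemma eigvec_linear: "eigvec x v \<Longrightarrow> eigvec (mat \<alpha> ** x + mat \<beta>) v"
  by (auto simp: eigvec_def matrix_vector_mult_add_rdistrib matrix_vector_mul_assoc[symmetric]
      mat_mulv vector_scalar_commute vector_smult_assoc vector_sadd_rdistrib[symmetric])

lemma eigvec_if_vdet_eq_0:
  fixes u w :: "'a::field^2"
  assumes "eigvec y w" "w \<noteq> 0" "vdet u w = 0"
  shows "eigvec y u"
  using assms vdet_eq_0_imp_parallel[of w u] vdet_swap[of u w] eigvec_smult by force

lemma adj2_mulv_eigvec:
  fixes g :: "'a::field^2^2"
  assumes "det g = 1" "g *v v = c *s v" "v \<noteq> 0"
  shows "c \<noteq> 0" "adj2 g *v v = inverse c *s v"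
proof -
  have v: "v = c *s (adj2 g *v v)"
    using assms(1,2) by (metis adj2_mult matrix_vector_mul_assoc matrix_vector_mul_lid vector_scalar_commute)
  then show "c \<noteq> 0"
    using assms(3) by auto
  then show "adj2 g *v v = inverse c *s v"
    by (subst v) (simp add: vector_smult_assoc)
qed

lemma exists_non_eigvec:
  fixes x :: "'a::field^2^2"
  assumes "\<nexists>c. x = mat c"
  obtains u where "u \<noteq> 0" "\<not> eigvec x u"
proof -
  obtain a b c d where x: "x = mat2 a b c d"
    by (rule mat2_cases)
  have "\<not> (eigvec x (vec2 1 0) \<and> eigvec x (vec2 0 1) \<and> eigvec x (vec2 1 1))"
  proof
    assume "eigvec x (vec2 1 0) \<and> eigvec x (vec2 0 1) \<and> eigvec x (vec2 1 1)"
    then have "c = 0" "b = 0" "a + b = c + d"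
      by (auto simp: eigvec_def x)
    then show False
      using assms by (auto simp: x mat_eq_mat2)
  qed
  then show ?thesis
    using that by (metis vec2_eq_0_iff zero_neq_one)
qed

lemma commute_if_common_eigbasis:
  fixes x x' :: "'a::field^2^2"
  assumes "vdet v w \<noteq> 0" "eigvec x v" "eigvec x w" "eigvec x' v" "eigvec x' w"
  shows "x ** x' = x' ** x"
proof -
  obtain a b c d where "x *v v = a *s v" "x *v w = b *s w" "x' *v v = c *s v" "x' *v w = d *s w"
    using assms(2-5) by (auto simp: eigvec_def)
  then have "(x ** x' - x' ** x) *v v = 0" "(x ** x' - x' ** x) *v w = 0"
    by (simp_all add: matrix_vector_mult_diff_rdistrib matrix_vector_mul_assoc[symmetric]
        vector_scalar_commute vector_smult_assoc mult.commute)
  then have "x ** x' - x' ** x = 0"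
    by (rule kills_independent_imp_zero[OF _ _ assms(1)])
  then show ?thesis
    by simp
qed

definition transvection :: "'a::comm_ring_1^2 \<Rightarrow> 'a^2^2" where
  "transvection u = mat2 (1 - u$1 * u$2) (u$1 * u$1) (- (u$2 * u$2)) (1 + u$1 * u$2)"

lemma transvection_mulv: "transvection u *v w = w + vdet u w *s u"
  by (cases u rule: vec2_cases, cases w rule: vec2_cases) (simp add: transvection_def algebra_simps)

lemma det_transvection [simp]: "det (transvection u) = 1"
  by (cases u rule: vec2_cases) (simp add: transvection_def algebra_simps)

lemma transvection_fixes: "transvection u *v u = u"
  by (simp add: transvection_mulv vdet_def)

lemma eigvec_transvection: "eigvec (transvection u) u"
  using transvection_fixes[of u] by (auto simp: eigvec_def intro: exI[of _ 1])

lemma vdet_eq_0_if_eigvec_transvection: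
  fixes u w :: "'a::field^2"
  assumes "eigvec (transvection u) w"
  shows "vdet u w = 0"
proof -
  obtain c where "w + vdet u w *s u = c *s w"
    using assms by (auto simp: eigvec_def transvection_mulv)
  then have "vdet u w *s u = (c - 1) *s w"
    by (simp add: algebra_simps vector_sub_rdistrib)
  then have "vdet u w * vdet u w = (c - 1) * vdet w w"
    by (metis vdet_smult_left)
  then show ?thesis
    by simp
qed

lemma transvection_nonscalar: "v \<noteq> 0 \<Longrightarrow> \<nexists>c. transvection v = mat c" for v :: "'a::field^2"
  by (cases v rule: vec2_cases) (auto simp: transvection_def mat_eq_mat2)

lemma transvection_conj:
  fixes g :: "'a::field^2^2"
  assumes "det g = 1"
  shows "g ** transvection v = transvection (g *v v) ** g"
  unfolding matrix_eq
  by (simp add: matrix_vector_mul_assoc[symmetric] transvection_mulv vdet_mulv assms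
      vec.add vec.scale)

lemma commute_if_fix_same_vector:
  fixes g h :: "'a::field^2^2"
  assumes "det g = 1" "det h = 1" "g *v v = v" "h *v v = v" "v \<noteq> 0"
  shows "g ** h = h ** g"
proof (rule commute_if_commute_nonscalar[OF transvection_nonscalar[OF \<open>v \<noteq> 0\<close>]])
  show "g ** transvection v = transvection v ** g" "h ** transvection v = transvection v ** h"
    using transvection_conj[of g v] transvection_conj[of h v] assms(1-4) by simp_all
qed

section \<open>Solvability of subgroups\<close>

lemma (in group) exp_of_derived_subset:
  assumes "subgroup H G"
  shows "(derived G ^^ n) H \<subseteq> H"
  by (induction n) (use derived_incl[OF _ assms] in auto)

lemma (in group) exp_of_derived_consistent:
  assumes "subgroup H G"
  shows "(derived (G\<lparr>carrier := H\<rparr>) ^^ n) H = (derived G ^^ n) H"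
  by (induction n) (simp_all add: derived_consistent[OF exp_of_derived_subset[OF assms] assms])

lemma (in group) solvable_subgroup_generated_iff:
  assumes "S \<subseteq> carrier G"
  shows "solvable (subgroup_generated G S) \<longleftrightarrow> (\<exists>n. (derived G ^^ n) (generate G S) = {\<one>})"
proof -
  have H: "subgroup (generate G S) G"
    using assms by (rule generate_is_subgroup)
  have "subgroup_generated G S = G\<lparr>carrier := generate G S\<rparr>"
    using assms by (simp add: subgroup_generated_def Int_absorb1)
  then show ?thesis
    using group.solvable_iff_trivial_derived_seq[OF subgroup_imp_group[OF H]]
    by (simp add: exp_of_derived_consistent[OF H])
qed

lemma (in group) commute_if_commutator_eq_one:
  assumes "x \<in> carrier G" "y \<in> carrier G" "x \<otimes> y \<otimes> inv x \<otimes> inv y = \<one>"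
  shows "x \<otimes> y = y \<otimes> x"
proof -
  have "inv y \<otimes> (y \<otimes> x) = x"
    using assms(1,2) by (simp add: m_assoc[symmetric])
  then have "x \<otimes> y = (x \<otimes> y \<otimes> inv x \<otimes> inv y) \<otimes> (y \<otimes> x)"
    using assms(1,2) by (simp add: m_assoc)
  then show ?thesis
    using assms by simp
qed

lemma (in group) solvable_subgroup_generated_if_metabelian:
  assumes K: "subgroup K G" and C: "subgroup C G" and "S \<subseteq> K"
    and comm_K: "\<And>g h. g \<in> K \<Longrightarrow> h \<in> K \<Longrightarrow> g \<otimes> h \<otimes> inv g \<otimes> inv h \<in> C"
    and comm_C: "\<And>g h. g \<in> C \<Longrightarrow> h \<in> C \<Longrightarrow> g \<otimes> h = h \<otimes> g"
  shows "solvable (subgroup_generated G S)"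
proof -
  have S: "S \<subseteq> carrier G"
    using \<open>S \<subseteq> K\<close> subgroup.subset[OF K] by blast
  have "derived G K \<subseteq> C"
    unfolding derived_def using comm_K by (intro generate_subgroup_incl[OF _ C]) blast
  moreover have "derived G C \<subseteq> {\<one>}"
    unfolding derived_def
  proof (rule generate_subgroup_incl[OF _ triv_subgroup])
    show "derived_set G C \<subseteq> {\<one>}"
    proof
      fix z assume "z \<in> derived_set G C"
      then obtain g h where gh: "g \<in> C" "h \<in> C" and z: "z = g \<otimes> h \<otimes> inv g \<otimes> inv h"
        by blast
      then have "z = h \<otimes> g \<otimes> inv g \<otimes> inv h"
        using comm_C by simp
      also have "\<dots> = \<one>"
        using gh subgroup.mem_carrier[OF C] by (simp add: m_assoc)
      finally show "z \<in> {\<one>}" by simp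
    qed
  qed
  ultimately have "(derived G ^^ 2) (generate G S) \<subseteq> {\<one>}"
    using mono_derived[OF mono_derived[OF generate_subgroup_incl[OF \<open>S \<subseteq> K\<close> K]]]
      mono_derived[of "derived G K" C]
    by (simp add: numeral_2_eq_2)
  moreover have "\<one> \<in> (derived G ^^ 2) (generate G S)"
    using subgroup.one_closed[OF exp_of_derived_is_subgroup[OF generate_is_subgroup[OF S]]] .
  ultimately show ?thesis
    using solvable_subgroup_generated_iff[OF S] by blast
qed

lemma (in group) solvable_imp_elem_commuting_with_conjugates:
  assumes "solvable G" and "carrier G \<noteq> {\<one>}"
  obtains a where "a \<in> carrier G" "a \<noteq> \<one>"
    "\<And>h. h \<in> carrier G \<Longrightarrow> (h \<otimes> a \<otimes> inv h) \<otimes> a = a \<otimes> (h \<otimes> a \<otimes> inv h)"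
proof -
  define D where "D k = (derived G ^^ k) (carrier G)" for k
  obtain n where "D n = {\<one>}"
    using assms(1) solvable_iff_trivial_derived_seq by (auto simp: D_def)
  moreover have "D 0 \<noteq> {\<one>}"
    using assms(2) by (simp add: D_def)
  ultimately obtain k where k: "D k \<noteq> {\<one>}" "D (Suc k) = {\<one>}"
    by (induction n) auto
  have normal: "D k \<lhd> G"
    unfolding D_def by (induction k) (simp_all add: normal_self derived_is_normal)
  obtain a where a: "a \<in> D k" "a \<noteq> \<one>"
    using k(1) normal.axioms(1)[OF normal, THEN subgroup.one_closed] by blast
  show ?thesis
  proof
    show a_G: "a \<in> carrier G"
      using a(1) normal.axioms(1)[OF normal, THEN subgroup.subset] by blast
    show "a \<noteq> \<one>" by (fact a(2))
    fix h assume h: "h \<in> carrier G"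
    let ?b = "h \<otimes> a \<otimes> inv h"
    have b: "?b \<in> D k"
      using normal.inv_op_closed2[OF normal h a(1)] .
    then have "?b \<otimes> a \<otimes> inv ?b \<otimes> inv a \<in> D (Suc k)"
      using a(1) by (auto simp: D_def derived_def intro!: generate.incl)
    then show "?b \<otimes> a = a \<otimes> ?b"
      using k(2) h a_G by (intro commute_if_commutator_eq_one) auto
  qed
qed

lemma iso_imp_solvable_iff:
  assumes "group G" "group H" "\<phi> \<in> iso G H"
  shows "solvable G \<longleftrightarrow> solvable H"
proof -
  have hom: "group_hom G H \<phi>"
    using assms by (simp add: group_hom_def group_hom_axioms_def iso_def)
  have "inj_on \<phi> (carrier G)" "\<phi> ` carrier G = carrier H"
    using assms(3) by (auto simp: iso_def bij_betw_def)
  then show ?thesis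
    using group_hom.inj_hom_imp_solvable[OF hom] group_hom.surj_hom_imp_solvable[OF hom] by blast
qed

lemma Sol_iso:
  assumes G: "group G" and H: "group H" and \<phi>: "\<phi> \<in> iso G H" and x: "x \<in> carrier G"
  shows "Sol H (\<phi> x) = \<phi> ` Sol G x"
proof -
  have hom: "group_hom G H \<phi>"
    using G H \<phi> by (simp add: group_hom_def group_hom_axioms_def iso_def)
  have carrier: "carrier H = \<phi> ` carrier G"
    using \<phi> by (simp add: iso_def bij_betw_def)
  have "solvable (subgroup_generated H {\<phi> x, \<phi> y}) \<longleftrightarrow> solvable (subgroup_generated G {x, y})"
    if y: "y \<in> carrier G" for y
  proof (rule iso_imp_solvable_iff[symmetric])
    show "\<phi> \<in> iso (subgroup_generated G {x, y}) (subgroup_generated H {\<phi> x, \<phi> y})"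
      using group_hom.iso_between_subgroups[OF hom \<phi>] x y by simp
  qed (simp_all add: G H group.group_subgroup_generated)
  then show ?thesis
    by (auto simp: Sol_def carrier)
qed

lemma card_Solv_iso:
  assumes G: "group G" and H: "group H" and \<phi>: "\<phi> \<in> iso G H"
  shows "card (Solv H) = card (Solv G)"
proof -
  have carrier: "carrier H = \<phi> ` carrier G" and inj: "inj_on \<phi> (carrier G)"
    using \<phi> by (simp_all add: iso_def bij_betw_def)
  have "Solv H = (image \<phi>) ` Solv G"
    unfolding Solv_def carrier using Sol_iso[OF G H \<phi>] by (auto simp: image_image)
  moreover have "inj_on (image \<phi>) (Solv G)"
    using inj_on_image_Pow[OF inj] by (rule inj_on_subset) (auto simp: Solv_def Sol_def)
  ultimately show ?thesis
    by (simp add: card_image)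
qed

section \<open>Metabelian subgroups of SL(2)\<close>

lemma carrier_SL2 [simp]: "carrier (SL2 TYPE('a::field)) = {A. det A = 1}"
  by (simp add: SL2_def)

lemma mult_SL2 [simp]: "A \<otimes>\<^bsub>SL2 TYPE('a::field)\<^esub> B = A ** B"
  by (simp add: SL2_def)

lemma one_SL2 [simp]: "\<one>\<^bsub>SL2 TYPE('a::field)\<^esub> = mat 1"
  by (simp add: SL2_def)

lemma group_SL2: "group (SL2 TYPE('a::field))"
proof (rule groupI)
  fix A :: "'a^2^2" assume "A \<in> carrier (SL2 TYPE('a))"
  then show "\<exists>B \<in> carrier (SL2 TYPE('a)). B \<otimes>\<^bsub>SL2 TYPE('a)\<^esub> A = \<one>\<^bsub>SL2 TYPE('a)\<^esub>"
    by (intro bexI[of _ "adj2 A"]) (simp_all add: adj2_mult)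
qed (simp_all add: det_mul matrix_mul_assoc)

lemma inv_SL2 [simp]: "det A = 1 \<Longrightarrow> inv\<^bsub>SL2 TYPE('a::field)\<^esub> A = adj2 A"
  by (intro group.inv_equality[OF group_SL2]) (simp_all add: adj2_mult)

definition shifts :: "'a::field^2^2 \<Rightarrow> 'a^2^2 \<Rightarrow> 'a \<Rightarrow> bool" where
  "shifts g m b \<longleftrightarrow> g ** m = (m + mat b) ** g"

definition normalizes_span :: "'a::field^2^2 \<Rightarrow> 'a^2^2 \<Rightarrow> bool" where
  "normalizes_span m g \<longleftrightarrow> (\<exists>\<alpha> \<beta>. g ** m = (mat \<alpha> ** m + mat \<beta>) ** g)"

lemma shifts_0_iff: "shifts g m 0 \<longleftrightarrow> g ** m = m ** g"
  by (simp add: shifts_def)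

lemma shifts_mult:
  assumes "shifts g m b" "shifts h m b'"
  shows "shifts (g ** h) m (b + b')"
proof -
  have "g ** h ** m = g ** ((m + mat b') ** h)"
    using assms(2) by (simp add: shifts_def matrix_mul_assoc[symmetric])
  also have "\<dots> = (g ** m + mat b' ** g) ** h"
    by (simp add: matrix_mul_assoc matrix_add_ldistrib mat_commute)
  also have "\<dots> = (m + mat (b + b')) ** (g ** h)"
    using assms(1) by (simp add: shifts_def matrix_mul_assoc matrix_add_rdistrib mat_add_mat[symmetric] add.assoc)
  finally show ?thesis
    by (simp add: shifts_def)
qed

lemma shifts_adj2:
  assumes "det g = 1" "shifts g m b"
  shows "shifts (adj2 g) m (- b)"
proof -
  have "adj2 g ** (g ** m) ** adj2 g = adj2 g ** ((m + mat b) ** g) ** adj2 g"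
    using assms(2) by (simp add: shifts_def)
  then have "m ** adj2 g = adj2 g ** m + mat b ** adj2 g"
    using assms(1) by (simp add: matrix_mul_assoc adj2_mult)
      (simp add: matrix_mul_assoc[symmetric] mult_adj2 matrix_add_ldistrib mat_commute)
  moreover have "(m + mat (- b)) ** adj2 g = m ** adj2 g - mat b ** adj2 g"
    by (cases m rule: mat2_cases, cases g rule: mat2_cases) (simp add: mat_eq_mat2 algebra_simps)
  ultimately show ?thesis
    by (simp add: shifts_def)
qed

lemma normalizes_span_if_shifts: "shifts g m b \<Longrightarrow> normalizes_span m g"
  unfolding shifts_def normalizes_span_def by (rule exI[of _ 1], rule exI[of _ b]) simp

lemma normalizes_span_if_commute: "g ** m = m ** g \<Longrightarrow> normalizes_span m g"
  by (rule normalizes_span_if_shifts[of _ _ 0]) (simp add: shifts_0_iff)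

lemma normalizes_span_linear:
  fixes m g :: "'a::field^2^2"
  assumes "normalizes_span m g"
  shows "normalizes_span (mat \<alpha> ** m + mat \<beta>) g"
proof -
  obtain a b where e: "g ** m = (mat a ** m + mat b) ** g"
    using assms by (auto simp: normalizes_span_def)
  have "g ** (mat \<alpha> ** m + mat \<beta>) = (mat \<alpha> ** (g ** m)) + mat \<beta> ** g"
    by (cases m rule: mat2_cases, cases g rule: mat2_cases) (simp add: mat_eq_mat2 algebra_simps)
  also have "\<dots> = (mat \<alpha> ** (mat a ** m + mat b) + mat \<beta>) ** g"
    unfolding e
    by (cases m rule: mat2_cases, cases g rule: mat2_cases) (simp add: mat_eq_mat2 algebra_simps)
  also have "\<dots> = (mat a ** (mat \<alpha> ** m + mat \<beta>) + mat (\<alpha> * b + \<beta> - a * \<beta>)) ** g"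
    by (cases m rule: mat2_cases) (simp add: mat_eq_mat2 algebra_simps)
  finally show ?thesis
    unfolding normalizes_span_def by blast
qed

lemma normalizes_span_if_conj_commutes:
  fixes a h :: "'a::field^2^2"
  assumes "\<nexists>c. a = mat c" "det h = 1" "(h ** a ** adj2 h) ** a = a ** (h ** a ** adj2 h)"
  shows "normalizes_span a h"
proof -
  obtain \<alpha> \<beta> where "h ** a ** adj2 h = mat \<alpha> ** a + mat \<beta>"
    using commute_nonscalar_imp_linear[OF assms(3)[symmetric] assms(1)] by blast
  moreover have "h ** a = (h ** a ** adj2 h) ** h"
    using assms(2) by (simp add: matrix_mul_assoc[symmetric] adj2_mult)
  ultimately show ?thesis
    unfolding normalizes_span_def by auto
qed

lemma subgroup_SL2I:
  assumes "P (mat 1)"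
    and "\<And>g h. det g = 1 \<Longrightarrow> det h = 1 \<Longrightarrow> P g \<Longrightarrow> P h \<Longrightarrow> P (g ** h)"
    and "\<And>g. det g = 1 \<Longrightarrow> P g \<Longrightarrow> P (adj2 g)"
  shows "subgroup {g. det g = 1 \<and> P g} (SL2 TYPE('a::field))"
proof (rule group.subgroupI[OF group_SL2])
  show "{g. det g = 1 \<and> P g} \<noteq> {}"
    using assms(1) by (auto intro!: exI[of _ "mat 1"])
qed (use assms(2,3) in \<open>auto simp: det_mul\<close>)

lemma subgroup_shifting: "subgroup {g. det g = 1 \<and> (\<exists>b. shifts g m b)} (SL2 TYPE('a::field))"
proof (rule subgroup_SL2I)
  show "\<exists>b. shifts (mat 1) m b"
    by (auto simp: shifts_0_iff intro: exI[of _ 0])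
qed (blast intro: shifts_mult shifts_adj2)+

lemma subgroup_centralizing: "subgroup {g. det g = 1 \<and> g ** m = m ** g} (SL2 TYPE('a::field))"
  using subgroup_SL2I[of "\<lambda>g. shifts g m 0"] shifts_mult[of _ m 0 _ 0] shifts_adj2[of _ m 0]
  by (simp add: shifts_0_iff)

lemma subgroup_line_stabilizer:
  assumes "v \<noteq> 0"
  shows "subgroup {g. det g = 1 \<and> eigvec g v} (SL2 TYPE('a::field))"
proof (rule subgroup_SL2I)
  show "eigvec (mat 1) v"
    by (auto simp: eigvec_def intro: exI[of _ 1])
  show "eigvec (g ** h) v" if "eigvec g v" "eigvec h v" for g h :: "'a^2^2"
    using that by (auto simp: eigvec_def matrix_vector_mul_assoc[symmetric] vector_scalar_commute
        vector_smult_assoc)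
  show "eigvec (adj2 g) v" if "det g = 1" "eigvec g v" for g :: "'a^2^2"
    using that adj2_mulv_eigvec(2)[OF _ _ assms] unfolding eigvec_def by blast
qed

lemma subgroup_vector_stabilizer: "subgroup {g. det g = 1 \<and> g *v v = v} (SL2 TYPE('a::field))"
proof (rule subgroup_SL2I)
  show "adj2 g *v v = v" if "det g = 1" "g *v v = v" for g :: "'a^2^2"
    using that by (metis adj2_mult matrix_vector_mul_assoc matrix_vector_mul_lid)
qed (simp_all add: matrix_vector_mul_assoc[symmetric])

lemma solvable_if_common_eigvec:
  fixes x y :: "'a::field^2^2"
  assumes "det x = 1" "det y = 1" "v \<noteq> 0" "eigvec x v" "eigvec y v"
  shows "solvable (subgroup_generated (SL2 TYPE('a)) {x, y})"
proof (rule group.solvable_subgroup_generated_if_metabelian[OF group_SL2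
      subgroup_line_stabilizer[OF \<open>v \<noteq> 0\<close>] subgroup_vector_stabilizer])
  show "{x, y} \<subseteq> {g. det g = 1 \<and> eigvec g v}"
    using assms by simp
next
  fix g h :: "'a^2^2"
  assume "g \<in> {g. det g = 1 \<and> eigvec g v}" "h \<in> {g. det g = 1 \<and> eigvec g v}"
  then obtain c d where g: "det g = 1" "g *v v = c *s v" and h: "det h = 1" "h *v v = d *s v"
    by (auto simp: eigvec_def)
  note g' = adj2_mulv_eigvec[OF g \<open>v \<noteq> 0\<close>] and h' = adj2_mulv_eigvec[OF h \<open>v \<noteq> 0\<close>]
  have "(g ** h ** adj2 g ** adj2 h) *v v = (c * d * inverse c * inverse d) *s v"
    using g h g' h'
    by (simp add: matrix_vector_mul_assoc[symmetric] vector_scalar_commute vector_smult_assoc mult_ac)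
  also have "\<dots> = v"
    using g'(1) h'(1) by (simp add: field_simps)
  finally show "g \<otimes>\<^bsub>SL2 TYPE('a)\<^esub> h \<otimes>\<^bsub>SL2 TYPE('a)\<^esub> inv\<^bsub>SL2 TYPE('a)\<^esub> g \<otimes>\<^bsub>SL2 TYPE('a)\<^esub> inv\<^bsub>SL2 TYPE('a)\<^esub> h
      \<in> {g. det g = 1 \<and> g *v v = v}"
    using g h by (simp add: det_mul)
next
  fix g h :: "'a^2^2"
  assume "g \<in> {g. det g = 1 \<and> g *v v = v}" "h \<in> {g. det g = 1 \<and> g *v v = v}"
  then show "g \<otimes>\<^bsub>SL2 TYPE('a)\<^esub> h = h \<otimes>\<^bsub>SL2 TYPE('a)\<^esub> g"
    using commute_if_fix_same_vector \<open>v \<noteq> 0\<close> by auto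
qed

lemma solvable_if_common_shift:
  fixes x y m :: "'a::field^2^2"
  assumes "det x = 1" "det y = 1" "\<nexists>c. m = mat c" "shifts x m b" "shifts y m b'"
  shows "solvable (subgroup_generated (SL2 TYPE('a)) {x, y})"
proof (rule group.solvable_subgroup_generated_if_metabelian[OF group_SL2
      subgroup_shifting subgroup_centralizing])
  show "{x, y} \<subseteq> {g. det g = 1 \<and> (\<exists>b. shifts g m b)}"
    using assms by auto
next
  fix g h :: "'a^2^2"
  assume "g \<in> {g. det g = 1 \<and> (\<exists>b. shifts g m b)}" "h \<in> {g. det g = 1 \<and> (\<exists>b. shifts g m b)}"
  then obtain c d where g: "det g = 1" "shifts g m c" and h: "det h = 1" "shifts h m d"
    by auto
  have "shifts (g ** h ** adj2 g ** adj2 h) m (c + d + - c + - d)"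
    by (intro shifts_mult shifts_adj2 g h)
  then show "g \<otimes>\<^bsub>SL2 TYPE('a)\<^esub> h \<otimes>\<^bsub>SL2 TYPE('a)\<^esub> inv\<^bsub>SL2 TYPE('a)\<^esub> g \<otimes>\<^bsub>SL2 TYPE('a)\<^esub> inv\<^bsub>SL2 TYPE('a)\<^esub> h
      \<in> {g. det g = 1 \<and> g ** m = m ** g}"
    using g(1) h(1) by (simp add: det_mul shifts_0_iff)
next
  fix g h :: "'a^2^2"
  assume "g \<in> {g. det g = 1 \<and> g ** m = m ** g}" "h \<in> {g. det g = 1 \<and> g ** m = m ** g}"
  then have "g ** h = h ** g"
    using commute_if_commute_nonscalar[OF \<open>\<nexists>c. m = mat c\<close>, of g h] by blast
  then show "g \<otimes>\<^bsub>SL2 TYPE('a)\<^esub> h = h \<otimes>\<^bsub>SL2 TYPE('a)\<^esub> g"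
    by simp
qed

text \<open>x and y lie in a common Borel subgroup (the stabiliser of a line), or both normalise the
  algebra spanned by the identity and some m of trace 1, whose elements of determinant 1 form a
  maximal torus. In characteristic 2 these normalisers are dihedral, and together with the
  Borel subgroups they are the maximal solvable subgroups.\<close>

definition borel_or_dihedral :: "'a::field^2^2 \<Rightarrow> 'a^2^2 \<Rightarrow> bool" where
  "borel_or_dihedral x y \<longleftrightarrow>
     (\<exists>v. v \<noteq> 0 \<and> eigvec x v \<and> eigvec y v) \<or>
     (\<exists>m. trace m = 1 \<and> normalizes_span m x \<and> normalizes_span m y)"

lemma borel_or_dihedral_sym: "borel_or_dihedral x y \<longleftrightarrow> borel_or_dihedral y x"
  unfolding borel_or_dihedral_def by blast

lemma borel_or_dihedral_if_normalizes_span: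
  fixes m x y :: "'a::field^2^2"
  assumes "trace m \<noteq> 0" "normalizes_span m x" "normalizes_span m y"
  shows "borel_or_dihedral x y"
proof -
  let ?m = "mat (inverse (trace m)) ** m + mat 0"
  have "trace ?m = 1"
    using assms(1) by (simp only: trace_linear) simp
  moreover have "normalizes_span ?m x" "normalizes_span ?m y"
    using normalizes_span_linear assms(2,3) by blast+
  ultimately show ?thesis
    unfolding borel_or_dihedral_def by blast
qed

section \<open>Characteristic 2\<close>

locale char2 =
  fixes F :: "'a::field itself"
  assumes two_eq_zero: "(2::'a) = 0"
begin

lemma add_self [simp]: "x + x = (0::'a)"
  using two_eq_zero by (metis mult_2 mult_zero_left)

lemma uminus_eq_self [simp]: "- x = (x::'a)"
  using add_self[of x] by (metis add_eq_0_iff2)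

lemma diff_eq_add [simp]: "x - y = x + (y::'a)"
  by (simp only: diff_conv_add_uminus uminus_eq_self)

lemma add_add_self [simp]: "x + (x + y) = (y::'a)"
  by (simp only: add.assoc[symmetric] add_self add_0)

lemma numeral_Bit0_eq_0 [simp]: "numeral (Num.Bit0 n) = (0::'a)"
  by (simp only: numeral_Bit0 add_self)

lemma vec_uminus_eq_self [simp]: "- v = (v :: 'a^'n)"
  by (simp add: vec_eq_iff)

lemma mat_uminus_eq_self [simp]: "- A = (A :: 'a^'n^'m)"
  by (simp add: vec_eq_iff)

lemma vec_add_self [simp]: "v + v = (0 :: 'a^'n)"
  by (simp add: vec_eq_iff)

lemma mat_add_self [simp]: "A + A = (0 :: 'a^'n^'m)"
  by (simp add: vec_eq_iff)

lemma square_add: "(x + y) * (x + y) = x * x + y * (y::'a)"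
  by (simp add: distrib_left distrib_right mult.commute[of y x] add_ac)

lemma square_eq_square_iff [simp]: "x * x = y * y \<longleftrightarrow> x = (y::'a)"
proof
  assume "x * x = y * y"
  then have "(x + y) * (x + y) = 0"
    by (simp add: algebra_simps)
  then show "x = y"
    by (metis add_add_self add_0_right mult_eq_0_iff)
qed simp

lemma square_eq_1_iff [simp]: "x * x = 1 \<longleftrightarrow> x = (1::'a)"
  using square_eq_square_iff[of x 1] by simp

lemma scalar_det_1: "det (mat c :: 'a^2^2) = 1 \<Longrightarrow> c = 1"
  by (simp add: mat_eq_mat2)

lemma nonscalar_if_trace_ne_0: "trace (m :: 'a^2^2) \<noteq> 0 \<Longrightarrow> \<nexists>c. m = mat c"
  by (auto simp: mat_eq_mat2)

lemma adj2_eq_add_trace: "adj2 A = A + mat (trace A)" for A :: "'a^2^2"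
  by (cases A rule: mat2_cases) (simp add: mat_eq_mat2)

lemma fixed_vector_if_trace_0:
  fixes a :: "'a^2^2"
  assumes "det a = 1" "trace a = 0"
  obtains v where "v \<noteq> 0" "a *v v = v"
proof -
  have "det (a + mat 1) = 0"
    using assms by (simp add: det_add_mat2)
  then obtain v where "v \<noteq> 0" "(a + mat 1) *v v = 0"
    using det_eq_0_iff_kernel by blast
  then show ?thesis
    using that[of v] by (simp add: matrix_vector_mult_add_rdistrib add_eq_0_iff2)
qed

lemma shifts_if_normalizes_span:
  fixes g m :: "'a^2^2"
  assumes "det g = 1" "trace m \<noteq> 0" "normalizes_span m g"
  shows "\<exists>b. shifts g m b"
proof -
  obtain \<alpha> \<beta> where e: "g ** m = (mat \<alpha> ** m + mat \<beta>) ** g"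
    using assms(3) by (auto simp: normalizes_span_def)
  then have "g ** m ** adj2 g = mat \<alpha> ** m + mat \<beta>"
    using assms(1) by (simp add: matrix_mul_assoc[symmetric] mult_adj2)
  then have "trace m = \<alpha> * trace m"
    using trace_conj_adj2[of g m] assms(1) by (simp add: trace_linear)
  then have "\<alpha> = 1"
    using assms(2) by simp
  then show ?thesis
    using e by (auto simp: shifts_def)
qed

lemma solvable_if_borel_or_dihedral:
  fixes x y :: "'a^2^2"
  assumes "det x = 1" "det y = 1" "borel_or_dihedral x y"
  shows "solvable (subgroup_generated (SL2 TYPE('a)) {x, y})"
  using assms(3) unfolding borel_or_dihedral_def
proof (elim disjE exE conjE)
  fix v assume "v \<noteq> 0" "eigvec x v" "eigvec y v"
  then show ?thesis
    by (rule solvable_if_common_eigvec[OF assms(1,2)])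
next
  fix m :: "'a^2^2"
  assume m: "trace m = 1" "normalizes_span m x" "normalizes_span m y"
  obtain b where "shifts x m b"
    using shifts_if_normalizes_span[OF assms(1) _ m(2)] m(1) by auto
  moreover obtain b' where "shifts y m b'"
    using shifts_if_normalizes_span[OF assms(2) _ m(3)] m(1) by auto
  moreover have "trace m \<noteq> 0"
    using m(1) by simp
  ultimately show ?thesis
    using solvable_if_common_shift[OF assms(1,2) nonscalar_if_trace_ne_0] by blast
qed

lemma normalizes_span_unipotent:
  fixes a h :: "'a^2^2"
  assumes a: "det a = 1" "a \<noteq> mat 1" "trace a = 0" and h: "det h = 1" "normalizes_span a h"
  obtains \<alpha> where "\<alpha> \<noteq> 0" "h ** a = (mat \<alpha> ** (a + mat 1) + mat 1) ** h"
proof -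
  obtain \<alpha> \<beta> where e: "h ** a = (mat \<alpha> ** a + mat \<beta>) ** h"
    using h(2) by (auto simp: normalizes_span_def)
  have "h ** a ** adj2 h = mat \<alpha> ** a + mat \<beta>"
    using e h(1) by (metis matrix_mul_assoc matrix_mul_rid mult_adj2)
  then have "det (mat \<alpha> ** a + mat \<beta>) = 1"
    by (metis a(1) h(1) det_adj2 det_mul mult_1)
  then have "(\<alpha> + \<beta>) * (\<alpha> + \<beta>) = 1"
    using a(1,3) by (simp only: det_linear square_add) simp
  then have \<beta>: "\<beta> = 1 + \<alpha>"
    by (metis add_add_self add.commute square_eq_1_iff)
  have "\<alpha> \<noteq> 0"
  proof
    assume "\<alpha> = 0"
    then have "adj2 h ** (h ** a) = adj2 h ** h"
      using e \<beta> by simp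
    then show False
      using a(2) h(1) by (simp add: matrix_mul_assoc adj2_mult)
  qed
  moreover have "mat \<alpha> ** a + mat \<beta> = mat \<alpha> ** (a + mat 1) + mat 1"
    unfolding \<beta> by (cases a rule: mat2_cases) (simp add: mat_eq_mat2 algebra_simps)
  ultimately show ?thesis
    using that e by simp
qed

lemma eigvec_if_normalizes_span_unipotent:
  fixes a h :: "'a^2^2"
  assumes a: "det a = 1" "a \<noteq> mat 1" "trace a = 0" "a *v v = v" "v \<noteq> 0"
    and h: "det h = 1" "normalizes_span a h"
  shows "eigvec h v"
proof -
  obtain \<alpha> where "\<alpha> \<noteq> 0" and e: "h ** a = (mat \<alpha> ** (a + mat 1) + mat 1) ** h"
    using normalizes_span_unipotent[OF a(1-3) h] by blast
  have "(a + mat 1) *v v = 0" "a + mat 1 \<noteq> 0"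
    using a(2,4) by (auto simp: matrix_vector_mult_add_rdistrib add_eq_0_iff2)
  moreover have "h *v v = (mat \<alpha> ** (a + mat 1) + mat 1) *v (h *v v)"
    using e a(4) by (metis matrix_vector_mul_assoc)
  then have "(a + mat 1) *v (h *v v) = 0"
    using \<open>\<alpha> \<noteq> 0\<close> by (simp add: linear_mulv)
  ultimately obtain k where "h *v v = k *s v"
    using parallel_if_common_kernel a(5) by blast
  then show ?thesis
    by (auto simp: eigvec_def)
qed

lemma borel_or_dihedral_if_normalizes_common_span:
  fixes a x y :: "'a^2^2"
  assumes a: "det a = 1" "a \<noteq> mat 1" and "det x = 1" "det y = 1"
    and "normalizes_span a x" "normalizes_span a y"
  shows "borel_or_dihedral x y"
proof (cases "trace a = 0")
  case True
  obtain v where "v \<noteq> 0" "a *v v = v"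
    by (rule fixed_vector_if_trace_0[OF a(1) True])
  then have "eigvec x v" "eigvec y v"
    using eigvec_if_normalizes_span_unipotent[OF a True] assms(3-6) by auto
  then show ?thesis
    using \<open>v \<noteq> 0\<close> by (auto simp: borel_or_dihedral_def)
next
  case False
  then show ?thesis
    using borel_or_dihedral_if_normalizes_span assms(5,6) by blast
qed

lemma borel_or_dihedral_if_solvable:
  fixes x y :: "'a^2^2"
  assumes "det x = 1" "det y = 1" and sol: "solvable (subgroup_generated (SL2 TYPE('a)) {x, y})"
  shows "borel_or_dihedral x y"
proof -
  let ?H = "subgroup_generated (SL2 TYPE('a)) {x, y}"
  interpret H: group ?H
    by (simp add: group.group_subgroup_generated[OF group_SL2])
  have xy: "x \<in> carrier ?H" "y \<in> carrier ?H"
    using assms(1,2) group.subgroup_generated_subset_carrier_subset[OF group_SL2, of "{x, y}"] by auto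
  have det_H: "det h = 1" if "h \<in> carrier ?H" for h
    using that group.carrier_subgroup_generated_subset[OF group_SL2, of "{x, y}"] by auto
  show ?thesis
  proof (cases "carrier ?H = {\<one>\<^bsub>?H\<^esub>}")
    case True
    then have "x = mat 1" "y = mat 1"
      using xy by auto
    moreover have "eigvec (mat 1) (vec2 1 0)"
      unfolding eigvec_def by (metis matrix_vector_mul_lid vector_smult_lid)
    ultimately show ?thesis
      unfolding borel_or_dihedral_def by (intro disjI1 exI[of _ "vec2 1 0"]) simp
  next
    case False
    obtain a where a: "a \<in> carrier ?H" "a \<noteq> \<one>\<^bsub>?H\<^esub>"
      and conj: "\<And>h. h \<in> carrier ?H \<Longrightarrow>
        (h \<otimes>\<^bsub>?H\<^esub> a \<otimes>\<^bsub>?H\<^esub> inv\<^bsub>?H\<^esub> h) \<otimes>\<^bsub>?H\<^esub> a = a \<otimes>\<^bsub>?H\<^esub> (h \<otimes>\<^bsub>?H\<^esub> a \<otimes>\<^bsub>?H\<^esub> inv\<^bsub>?H\<^esub> h)"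
      using H.solvable_imp_elem_commuting_with_conjugates[OF sol False] by blast
    have "det a = 1" "a \<noteq> mat 1"
      using a det_H by simp_all
    then have "\<nexists>c. a = mat c"
      using scalar_det_1 by metis
    have "normalizes_span a h" if "h \<in> carrier ?H" for h
      using normalizes_span_if_conj_commutes[OF \<open>\<nexists>c. a = mat c\<close> det_H[OF that]] conj[OF that] that
        det_H by (simp add: group.inv_subgroup_generated[OF group_SL2])
    then show ?thesis
      using borel_or_dihedral_if_normalizes_common_span \<open>det a = 1\<close> \<open>a \<noteq> mat 1\<close> assms(1,2) xy
      by blast
  qed
qed

lemma Sol_SL2:
  "det x = 1 \<Longrightarrow> Sol (SL2 TYPE('a)) x = {y. det y = 1 \<and> borel_or_dihedral x y}"
  unfolding Sol_def using solvable_if_borel_or_dihedral borel_or_dihedral_if_solvable by auto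

lemma commute_if_shifts_trace_ne_0:
  fixes y m :: "'a^2^2"
  assumes "det y = 1" "trace y \<noteq> 0" "shifts y m b"
  shows "y ** m = m ** y"
proof -
  have "(y ** y) ** m = m ** (y ** y)"
    using shifts_mult[OF assms(3,3)] by (simp add: shifts_0_iff)
  moreover have "y ** y = mat (trace y) ** y + mat 1"
    using cayley_hamilton2[of y] assms(1) by simp
  ultimately have "mat (trace y) ** (y ** m) = mat (trace y) ** (m ** y)"
    by (simp add: matrix_add_ldistrib matrix_add_rdistrib matrix_mul_assoc mat_commute)
  then show ?thesis
    using assms(2) mat_mult_cancel by blast
qed

lemma borel_or_dihedral_iff_semisimple:
  fixes g y :: "'a^2^2"
  assumes "det y = 1" "trace y \<noteq> 0"
  shows "borel_or_dihedral g y \<longleftrightarrow> normalizes_span y g \<or> (\<exists>v. v \<noteq> 0 \<and> eigvec g v \<and> eigvec y v)"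
proof
  assume "borel_or_dihedral g y"
  then show "normalizes_span y g \<or> (\<exists>v. v \<noteq> 0 \<and> eigvec g v \<and> eigvec y v)"
    unfolding borel_or_dihedral_def
  proof (elim disjE exE conjE)
    fix m :: "'a^2^2"
    assume m: "trace m = 1" "normalizes_span m g" "normalizes_span m y"
    obtain b where "shifts y m b"
      using shifts_if_normalizes_span[OF assms(1) _ m(3)] m(1) by auto
    then have "y ** m = m ** y"
      by (rule commute_if_shifts_trace_ne_0[OF assms])
    then obtain \<alpha> \<beta> where m_eq: "m = mat \<alpha> ** y + mat \<beta>"
      using commute_nonscalar_imp_linear[OF _ nonscalar_if_trace_ne_0[OF assms(2)]] by metis
    then have "\<alpha> \<noteq> 0"
      using m(1) by (auto simp: trace_linear)
    then have "y = mat (inverse \<alpha>) ** m + mat (\<beta> * inverse \<alpha>)"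
      unfolding m_eq by (cases y rule: mat2_cases) (simp add: mat_eq_mat2 field_simps)
    then show ?thesis
      using normalizes_span_linear[OF m(2)] by metis
  qed blast
next
  have "normalizes_span y y"
    by (simp add: normalizes_span_if_commute)
  moreover assume "normalizes_span y g \<or> (\<exists>v. v \<noteq> 0 \<and> eigvec g v \<and> eigvec y v)"
  ultimately show "borel_or_dihedral g y"
    using borel_or_dihedral_if_normalizes_span[OF assms(2)] unfolding borel_or_dihedral_def by blast
qed

lemma borel_or_dihedral_iff_both_semisimple:
  fixes x y :: "'a^2^2"
  assumes "det x = 1" "det y = 1" "trace x \<noteq> 0" "trace y \<noteq> 0"
  shows "borel_or_dihedral x y \<longleftrightarrow> x ** y = y ** x \<or> (\<exists>v. v \<noteq> 0 \<and> eigvec x v \<and> eigvec y v)"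
proof -
  have "normalizes_span y x \<longleftrightarrow> x ** y = y ** x"
  proof
    assume "normalizes_span y x"
    then obtain b where "shifts x y b"
      using shifts_if_normalizes_span[OF assms(1,4)] by blast
    then show "x ** y = y ** x"
      by (rule commute_if_shifts_trace_ne_0[OF assms(1,3)])
  qed (rule normalizes_span_if_commute)
  then show ?thesis
    using borel_or_dihedral_iff_semisimple[OF assms(2,4)] by simp
qed

lemma borel_or_dihedral_if_commute_semisimple:
  fixes x x' y :: "'a^2^2"
  assumes "det x = 1" "trace x \<noteq> 0" "x ** x' = x' ** x" "borel_or_dihedral x y"
  shows "borel_or_dihedral x' y"
proof -
  obtain \<alpha> \<beta> where x': "x' = mat \<alpha> ** x + mat \<beta>"
    using commute_nonscalar_imp_linear[OF assms(3) nonscalar_if_trace_ne_0[OF assms(2)]] by blast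
  from assms(4)[unfolded borel_or_dihedral_def] show ?thesis
  proof (elim disjE exE conjE)
    fix m :: "'a^2^2"
    assume m: "trace m = 1" "normalizes_span m x" "normalizes_span m y"
    obtain b where "shifts x m b"
      using shifts_if_normalizes_span[OF assms(1) _ m(2)] m(1) by auto
    then have "x ** m = m ** x"
      by (rule commute_if_shifts_trace_ne_0[OF assms(1,2)])
    then obtain \<gamma> \<delta> where m_eq: "m = mat \<gamma> ** x + mat \<delta>"
      using commute_nonscalar_imp_linear[OF _ nonscalar_if_trace_ne_0[OF assms(2)]] by metis
    have "normalizes_span m x'"
      unfolding x' m_eq by (intro normalizes_span_if_commute commute_linear)
    then show ?thesis
      using m(1,3) unfolding borel_or_dihedral_def by blast
  next
    fix v assume "v \<noteq> 0" "eigvec x v" "eigvec y v"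
    then show ?thesis
      unfolding x' borel_or_dihedral_def using eigvec_linear by blast
  qed
qed

lemma second_eigvec:
  fixes x :: "'a^2^2"
  assumes x: "det x = 1" "trace x \<noteq> 0" and v: "eigvec x v" "v \<noteq> 0"
  obtains w where "vdet v w \<noteq> 0" "eigvec x w"
proof -
  obtain l where l: "x *v v = l *s v"
    using v(1) by (auto simp: eigvec_def)
  have "l \<noteq> 0"
    using adj2_mulv_eigvec(1)[OF x(1) l v(2)] .
  have "(x + mat l) *v v = 0"
    using l by (simp add: matrix_vector_mult_add_rdistrib mat_mulv)
  then have "det (x + mat l) = 0"
    using det_eq_0_iff_kernel v(2) by blast
  then have char_l: "1 + l * trace x + l * l = 0"
    using x(1) by (simp add: det_add_mat2)
  have "det (x + mat (inverse l)) = inverse l * inverse l * (1 + l * trace x + l * l)"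
    using x(1) \<open>l \<noteq> 0\<close> by (simp add: det_add_mat2 field_simps)
  then obtain w where w: "w \<noteq> 0" "(x + mat (inverse l)) *v w = 0"
    using char_l det_eq_0_iff_kernel by auto
  then have xw: "x *v w = inverse l *s w"
    by (simp add: matrix_vector_mult_add_rdistrib mat_mulv add_eq_0_iff2)
  have "vdet v w \<noteq> 0"
  proof
    assume "vdet v w = 0"
    then obtain k where "w = k *s v"
      using vdet_eq_0_imp_parallel v(2) by blast
    then have "x *v w = l *s w"
      using l by (simp add: vector_scalar_commute vector_smult_assoc mult.commute)
    then have "l = inverse l"
      using xw w(1) by (metis vector_mul_rcancel)
    then have "l = 1"
      using \<open>l \<noteq> 0\<close> by (metis square_eq_1_iff right_inverse)
    then show False
      using char_l x(2) by simp
  qed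
  then show ?thesis
    using that xw by (auto simp: eigvec_def)
qed

lemma trace_transvection [simp]: "trace (transvection u) = 0" for u :: "'a^2"
  by (simp add: transvection_def)

lemma transvection_smult_mult:
  "transvection (k *s u) ** transvection (l *s u) = transvection ((k + l) *s u)" for u :: "'a^2"
  by (cases u rule: vec2_cases) (simp add: transvection_def algebra_simps)

lemma transvection_square [simp]: "transvection u ** transvection u = mat 1" for u :: "'a^2"
  using transvection_smult_mult[of 1 u 1] by (simp add: transvection_def mat_eq_mat2)

lemma trace_transvection_mult: "trace (transvection u ** transvection v) = vdet u v * vdet u v"
  for u v :: "'a^2"
  by (cases u rule: vec2_cases, cases v rule: vec2_cases) (simp add: transvection_def algebra_simps)

lemma transvection_eq_1_iff [simp]: "transvection u = mat 1 \<longleftrightarrow> u = 0" for u :: "'a^2"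
  by (cases u rule: vec2_cases) (auto simp: transvection_def mat_eq_mat2)

lemma involution_square: "det z = 1 \<Longrightarrow> trace z = 0 \<Longrightarrow> z ** z = mat 1" for z :: "'a^2^2"
  using cayley_hamilton2[of z] by simp

lemma shifts_involution_mult_left:
  fixes z w :: "'a^2^2"
  assumes "det z = 1" "trace z = 0" "trace w = 0"
  shows "shifts z (z ** w) (trace (z ** w))"
proof -
  have "z ** (z ** w) = w"
    using involution_square[OF assms(1,2)] by (simp add: matrix_mul_assoc)
  also have "\<dots> = adj2 (z ** w) ** z"
    using involution_square[OF assms(1,2)] assms(2,3)
    by (simp add: adj2_mult_distrib adj2_eq_add_trace[of z] adj2_eq_add_trace[of w] matrix_mul_assoc[symmetric])
  finally show ?thesis
    by (simp add: shifts_def adj2_eq_add_trace[of "z ** w"])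
qed

lemma shifts_involution_mult_right:
  fixes z w :: "'a^2^2"
  assumes "trace z = 0" "trace w = 0"
  shows "shifts w (z ** w) (trace (z ** w))"
proof -
  have "w ** (z ** w) = adj2 (z ** w) ** w"
    using assms by (simp add: adj2_mult_distrib adj2_eq_add_trace[of z] adj2_eq_add_trace[of w] matrix_mul_assoc)
  then show ?thesis
    by (simp add: shifts_def adj2_eq_add_trace[of "z ** w"])
qed

lemma common_eigvec_if_commuting_involutions:
  fixes z w :: "'a^2^2"
  assumes z: "det z = 1" "trace z = 0" and w: "det w = 1" "trace w = 0" and zw: "z ** w = w ** z"
  obtains v where "v \<noteq> 0" "eigvec z v" "eigvec w v"
proof -
  have eigvec_if_fixed: "eigvec g v" if "g *v v = v" for g :: "'a^2^2" and v
    using that by (metis eigvec_def vector_smult_lid)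
  show ?thesis
  proof (cases "z = mat 1")
    case True
    obtain v where "v \<noteq> 0" "w *v v = v"
      by (rule fixed_vector_if_trace_0[OF w])
    then show ?thesis
      using that True eigvec_if_fixed by simp
  next
    case False
    obtain v where v: "v \<noteq> 0" "z *v v = v"
      by (rule fixed_vector_if_trace_0[OF z])
    let ?n = "z + mat 1"
    have "?n *v v = 0" "?n \<noteq> 0"
      using v(2) False by (auto simp: matrix_vector_mult_add_rdistrib add_eq_0_iff2)
    moreover have "?n *v (w *v v) = w *v (?n *v v)"
      using zw by (simp add: matrix_vector_mul_assoc matrix_add_ldistrib matrix_add_rdistrib)
    ultimately obtain k where "w *v v = k *s v"
      using parallel_if_common_kernel v(1) by (metis matrix_vector_mult_0_right)
    then show ?thesis
      using that v eigvec_if_fixed by (auto simp: eigvec_def)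
  qed
qed

lemma borel_or_dihedral_involutions:
  fixes z w :: "'a^2^2"
  assumes z: "det z = 1" "trace z = 0" and w: "det w = 1" "trace w = 0"
  shows "borel_or_dihedral z w"
proof (cases "trace (z ** w) = 0")
  case False
  then show ?thesis
    using borel_or_dihedral_if_normalizes_span normalizes_span_if_shifts
      shifts_involution_mult_left[OF z w(2)] shifts_involution_mult_right[OF z(2) w(2)] by blast
next
  case True
  have "z ** w = adj2 (z ** w)"
    using True by (simp add: adj2_eq_add_trace)
  also have "\<dots> = w ** z"
    using z(2) w(2) by (simp add: adj2_mult_distrib adj2_eq_add_trace[of z] adj2_eq_add_trace[of w])
  finally obtain v where "v \<noteq> 0" "eigvec z v" "eigvec w v"
    using common_eigvec_if_commuting_involutions[OF z w] by blast
  then show ?thesis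
    unfolding borel_or_dihedral_def by blast
qed

lemma borel_or_dihedral_one: "det y = 1 \<Longrightarrow> borel_or_dihedral (mat 1) y" for y :: "'a^2^2"
proof (cases "trace y = 0")
  case True
  assume "det y = 1"
  then show ?thesis
    using borel_or_dihedral_involutions[of "mat 1" y] True by (simp add: mat_eq_mat2)
next
  case False
  assume "det y = 1"
  then show ?thesis
    using borel_or_dihedral_iff_semisimple[OF _ False] normalizes_span_if_commute[of "mat 1" y] by simp
qed

lemma shift_eq_0_or_trace:
  fixes g y :: "'a^2^2"
  assumes "det g = 1" "det y = 1" "shifts g y b"
  shows "b = 0 \<or> b = trace y"
proof -
  have "g ** y ** adj2 g = y + mat b"
    using assms(1,3) by (metis shifts_def matrix_mul_assoc matrix_mul_rid mult_adj2)
  then have "det (y + mat b) = 1"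
    using assms(1,2) by (metis det_adj2 det_mul mult_1)
  then have "b * (trace y + b) = 0"
    using assms(2) by (simp add: det_add_mat2 algebra_simps)
  then show ?thesis
    by (auto simp: add_eq_0_iff2)
qed

lemma shifts_transvection_if_borel_or_dihedral:
  fixes y :: "'a^2^2" and u :: "'a^2"
  assumes y: "det y = 1" "trace y \<noteq> 0" and u: "\<not> eigvec y u"
    and "borel_or_dihedral y (transvection u)"
  shows "shifts (transvection u) y (trace y)"
proof -
  have "\<nexists>v. v \<noteq> 0 \<and> eigvec (transvection u) v \<and> eigvec y v"
    using vdet_eq_0_if_eigvec_transvection eigvec_if_vdet_eq_0 u by blast
  then have "normalizes_span y (transvection u)"
    using assms(4) borel_or_dihedral_iff_semisimple[OF y] borel_or_dihedral_sym by blast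
  then obtain b where b: "shifts (transvection u) y b"
    using shifts_if_normalizes_span[OF det_transvection y(2)] by blast
  have "b \<noteq> 0"
  proof
    assume "b = 0"
    then have "transvection u ** y = y ** transvection u"
      using b by (simp add: shifts_0_iff)
    moreover have "u \<noteq> 0"
      using u by (auto simp: eigvec_def)
    ultimately obtain \<alpha> \<beta> where "y = mat \<alpha> ** transvection u + mat \<beta>"
      using commute_nonscalar_imp_linear transvection_nonscalar by metis
    then show False
      using u eigvec_linear[OF eigvec_transvection] by metis
  qed
  then show ?thesis
    using shift_eq_0_or_trace[OF det_transvection y(1) b] b by auto
qed

lemma not_borel_or_dihedral_two_transvections:
  fixes y :: "'a^2^2" and u :: "'a^2"
  assumes y: "det y = 1" "trace y \<noteq> 0" and u: "\<not> eigvec y u"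
    and kl: "k \<noteq> 0" "l \<noteq> 0" "k \<noteq> l"
    and "borel_or_dihedral y (transvection (k *s u))" "borel_or_dihedral y (transvection (l *s u))"
  shows False
proof -
  \<comment> \<open>Both would conjugate y to y + trace y, so their product would commute with y.\<close>
  have "shifts (transvection (k *s u)) y (trace y)" "shifts (transvection (l *s u)) y (trace y)"
    using assms shifts_transvection_if_borel_or_dihedral[OF y] eigvec_smult_iff by metis+
  then have "shifts (transvection ((k + l) *s u)) y 0"
    using shifts_mult by (fastforce simp: transvection_smult_mult)
  then have "transvection ((k + l) *s u) ** y = y ** transvection ((k + l) *s u)"
    by (simp add: shifts_0_iff)
  moreover have "k + l \<noteq> 0" "u \<noteq> 0"
    using kl(3) u by (auto simp: add_eq_0_iff2 eigvec_def)
  ultimately obtain \<alpha> \<beta> where "y = mat \<alpha> ** transvection ((k + l) *s u) + mat \<beta>"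
    using commute_nonscalar_imp_linear transvection_nonscalar by (metis vector_mul_eq_0)
  then have "eigvec y ((k + l) *s u)"
    using eigvec_linear[OF eigvec_transvection] by metis
  then show False
    using u eigvec_smult_iff \<open>k + l \<noteq> 0\<close> by blast
qed

lemma dihedral_pair:
  fixes u v :: "'a^2"
  assumes "vdet u v \<noteq> 0"
  defines "y \<equiv> transvection u ** transvection v"
  shows "det y = 1" "trace y \<noteq> 0" "\<not> eigvec y u" "\<not> eigvec y v"
    "borel_or_dihedral (transvection u) y" "borel_or_dihedral (transvection v) y"
proof -
  show y: "det y = 1" "trace y \<noteq> 0"
    using assms by (simp_all add: y_def det_mul trace_transvection_mult)
  show "\<not> eigvec y u"
  proof
    assume "eigvec y u"
    then have "eigvec (transvection u ** y) u"
      using transvection_fixes[of u]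
      by (auto simp: eigvec_def matrix_vector_mul_assoc[symmetric] vector_scalar_commute)
    then have "vdet v u = 0"
      by (simp add: y_def matrix_mul_assoc vdet_eq_0_if_eigvec_transvection)
    then show False
      using assms(1) vdet_swap[of u v] by simp
  qed
  show "\<not> eigvec y v"
  proof
    assume "eigvec y v"
    then have "eigvec (transvection u) v"
      using transvection_fixes[of v] by (simp add: y_def eigvec_def matrix_vector_mul_assoc[symmetric])
    then have "vdet u v = 0"
      by (rule vdet_eq_0_if_eigvec_transvection)
    then show False
      using assms(1) by simp
  qed
  show "borel_or_dihedral (transvection u) y" "borel_or_dihedral (transvection v) y"
    using shifts_involution_mult_left[of "transvection u" "transvection v"]
      shifts_involution_mult_right[of "transvection u" "transvection v"]
      borel_or_dihedral_iff_semisimple[OF y] normalizes_span_if_shifts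
    by (simp_all add: y_def) blast+
qed

lemma dihedral_pair_separates:
  fixes u v :: "'a^2"
  assumes "vdet u v \<noteq> 0" "k \<noteq> 0" "k \<noteq> 1"
  shows "\<not> borel_or_dihedral (transvection (k *s u)) (transvection u ** transvection v)"
    "\<not> borel_or_dihedral (transvection (k *s v)) (transvection u ** transvection v)"
proof -
  note y = dihedral_pair[OF assms(1)]
  have "borel_or_dihedral (transvection u ** transvection v) (transvection (1 *s u))"
    "borel_or_dihedral (transvection u ** transvection v) (transvection (1 *s v))"
    using y(5,6) borel_or_dihedral_sym by auto
  then show "\<not> borel_or_dihedral (transvection (k *s u)) (transvection u ** transvection v)"
    "\<not> borel_or_dihedral (transvection (k *s v)) (transvection u ** transvection v)"
    using not_borel_or_dihedral_two_transvections[OF y(1,2) _ one_neq_zero assms(2) not_sym[OF assms(3)]]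
      y(3,4) borel_or_dihedral_sym by blast+
qed

end

section \<open>Counting solvabilizers\<close>

lemma card_image_eq_if_same_fibres:
  assumes "\<And>x y. x \<in> A \<Longrightarrow> y \<in> A \<Longrightarrow> f x = f y \<longleftrightarrow> g x = g y"
  shows "card (f ` A) = card (g ` A)"
proof -
  let ?h = "\<lambda>k. f (inv_into A g k)"
  have "f x = ?h (g x)" if "x \<in> A" for x
  proof -
    have "inv_into A g (g x) \<in> A" "g (inv_into A g (g x)) = g x"
      using that by (simp_all add: inv_into_into f_inv_into_f)
    then show ?thesis
      using assms that by metis
  qed
  then have "f ` A = ?h ` g ` A"
    by (auto simp: image_iff)
  moreover have "inj_on ?h (g ` A)"
    by (rule inj_onI) (metis assms f_inv_into_f inv_into_into)
  ultimately show ?thesis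
    by (simp add: card_image)
qed

text \<open>The datum determining the solvabilizer of x: nothing for the identity, the off-diagonal
  entries of an involution, and otherwise the off-diagonal entries divided by the trace, which
  determine the centraliser of x.\<close>

definition sol_class :: "'a::field^2^2 \<Rightarrow> ('a \<times> 'a + 'a \<times> 'a) option" where
  "sol_class x =
     (if x = mat 1 then None
      else if trace x = 0 then Some (Inl (x$1$2, x$2$1))
      else Some (Inr (x$1$2 / trace x, x$2$1 / trace x)))"

locale char2_finite = char2 F for F :: "'a::{field,finite} itself" +
  assumes card_gt_2: "CARD('a) > 2"
begin

lemma exists_ne_0_1: obtains g :: 'a where "g \<noteq> 0" "g \<noteq> 1"
proof -
  have "card {0, 1 :: 'a} \<le> 2"
    by (rule card_insert_le_m1) auto
  then have "\<not> UNIV \<subseteq> {0, 1 :: 'a}"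
    using card_gt_2 card_mono[of "{0, 1 :: 'a}" UNIV] by auto
  then show ?thesis
    using that by blast
qed

lemma square_root: obtains r :: 'a where "r * r = a"
proof -
  have "inj (\<lambda>x::'a. x * x)"
    by (auto simp: inj_def)
  then have "surj (\<lambda>x::'a. x * x)"
    by (rule finite_UNIV_inj_surj[OF finite_class.finite_UNIV])
  then show ?thesis
    using that by (metis surjD)
qed

lemma involution_eq_transvection:
  fixes g :: "'a^2^2"
  assumes "det g = 1" "trace g = 0" "g \<noteq> mat 1"
  obtains u where "u \<noteq> 0" "g = transvection u"
proof -
  obtain a b c d where g: "g = mat2 a b c d"
    by (rule mat2_cases)
  have "d = a"
    using assms(2) by (simp add: g add_eq_0_iff2)
  have "b * c = 1 + a * a"
    using assms(1) \<open>d = a\<close> by (simp add: g) (metis add_add_self add.commute)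
  obtain p q where pq: "p * p = b" "q * q = c"
    by (metis square_root)
  then have "(p * q) * (p * q) = (1 + a) * (1 + a)"
    using \<open>b * c = 1 + a * a\<close> by (simp add: square_add algebra_simps)
  then have "a = 1 + p * q"
    by (metis add_add_self square_eq_square_iff)
  then have "g = transvection (vec2 p q)"
    using \<open>d = a\<close> by (simp add: g transvection_def pq[symmetric])
  moreover have "vec2 p q \<noteq> 0"
    using calculation assms(3) by auto
  ultimately show ?thesis
    using that by blast
qed

lemma exists_transvection_not_borel_or_dihedral:
  fixes x :: "'a^2^2"
  assumes x: "det x = 1" "trace x \<noteq> 0"
  obtains u where "u \<noteq> 0" "\<not> borel_or_dihedral x (transvection u)"
proof -
  obtain u where u: "u \<noteq> 0" "\<not> eigvec x u"
    using exists_non_eigvec[OF nonscalar_if_trace_ne_0[OF x(2)]] by blast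
  obtain g :: 'a where g: "g \<noteq> 0" "g \<noteq> 1"
    by (rule exists_ne_0_1)
  have "\<not> borel_or_dihedral x (transvection (1 *s u)) \<or> \<not> borel_or_dihedral x (transvection (g *s u))"
    using not_borel_or_dihedral_two_transvections[OF x u(2) one_neq_zero g(1)] g(2) by metis
  then show ?thesis
    using that u(1) g(1) by (metis vector_smult_lid vector_mul_eq_0)
qed

lemma exists_not_borel_or_dihedral_with_transvection:
  fixes u :: "'a^2"
  assumes "u \<noteq> 0"
  obtains y where "det y = 1" "\<not> borel_or_dihedral (transvection u) y"
proof -
  obtain g :: 'a where g: "g \<noteq> 0" "g \<noteq> 1"
    by (rule exists_ne_0_1)
  let ?w = "inverse g *s u"
  have "?w \<noteq> 0"
    using assms g(1) by simp
  then obtain v where "vdet ?w v \<noteq> 0"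
    using exists_vdet_ne_0 by blast
  moreover have "g *s ?w = u"
    using g(1) by (simp add: vector_smult_assoc)
  ultimately have "\<not> borel_or_dihedral (transvection u) (transvection ?w ** transvection v)"
    using dihedral_pair_separates(1)[OF _ g] by metis
  then show ?thesis
    using that[of "transvection ?w ** transvection v"] by (simp add: det_mul)
qed

lemma exists_borel_or_dihedral_separating_transvections:
  fixes u u' :: "'a^2"
  assumes "u \<noteq> 0" "u' \<noteq> 0" "transvection u \<noteq> transvection u'"
  obtains y where "det y = 1" "borel_or_dihedral (transvection u) y"
    "\<not> borel_or_dihedral (transvection u') y"
proof (cases "vdet u u' = 0")
  case True
  then obtain k where k: "u' = k *s u"
    using vdet_eq_0_imp_parallel assms(1) by blast
  have "k \<noteq> 0" "k \<noteq> 1"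
    using k assms(2,3) by auto
  obtain v where "vdet u v \<noteq> 0"
    using exists_vdet_ne_0[OF assms(1)] by blast
  then show ?thesis
    using that dihedral_pair(1,5) dihedral_pair_separates(1)[OF _ \<open>k \<noteq> 0\<close> \<open>k \<noteq> 1\<close>] k by blast
next
  case False
  obtain g :: 'a where g: "g \<noteq> 0" "g \<noteq> 1"
    by (rule exists_ne_0_1)
  let ?w = "inverse g *s u'"
  have "vdet u ?w \<noteq> 0"
    using False g(1) by (simp add: vdet_swap[of u] vdet_smult_left)
  moreover have "g *s ?w = u'"
    using g(1) by (simp add: vector_smult_assoc)
  ultimately show ?thesis
    using that dihedral_pair(1,5) dihedral_pair_separates(2)[OF _ g] by metis
qed

lemma commute_if_same_borel_or_dihedral:
  fixes x x' :: "'a^2^2"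
  assumes x: "det x = 1" "trace x \<noteq> 0" and x': "det x' = 1" "trace x' \<noteq> 0"
    and same: "\<And>y. det y = 1 \<Longrightarrow> borel_or_dihedral x y \<longleftrightarrow> borel_or_dihedral x' y"
  shows "x ** x' = x' ** x"
proof -
  have "borel_or_dihedral x x'"
    using same[OF x'(1)] borel_or_dihedral_iff_both_semisimple[OF x'(1) x'(1) x'(2) x'(2)] by simp
  then consider "x ** x' = x' ** x" | v where "v \<noteq> 0" "eigvec x v" "eigvec x' v"
    using borel_or_dihedral_iff_both_semisimple[OF x(1) x'(1) x(2) x'(2)] by blast
  then show ?thesis
  proof cases
    case (2 v)
    obtain w where w: "vdet v w \<noteq> 0" "eigvec x w"
      using second_eigvec[OF x 2(2,1)] by blast
    have "w \<noteq> 0"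
      using w(1) by (auto simp: vdet_def)
    show ?thesis
    proof (cases "eigvec x' w")
      case True
      then show ?thesis
        using commute_if_common_eigbasis[OF w(1) 2(2) w(2) 2(3)] by simp
    next
      case False
      obtain g :: 'a where g: "g \<noteq> 0" "g \<noteq> 1"
        by (rule exists_ne_0_1)
      have "borel_or_dihedral x (transvection (k *s w))" if "k \<noteq> 0" for k
        using \<open>w \<noteq> 0\<close> w(2) eigvec_smult_iff[OF that] eigvec_transvection
        unfolding borel_or_dihedral_def by blast
      then have x'_transv: "borel_or_dihedral x' (transvection (k *s w))" if "k \<noteq> 0" for k
        using same det_transvection that by blast
      show ?thesis
        using not_borel_or_dihedral_two_transvections[OF x' False one_neq_zero g(1) not_sym[OF g(2)]
            x'_transv[OF one_neq_zero] x'_transv[OF g(1)]] ..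
    qed
  qed
qed

lemma trace_eq_0_iff_borel_or_dihedral_transvections:
  fixes x :: "'a^2^2"
  assumes "det x = 1"
  shows "trace x = 0 \<longleftrightarrow> (\<forall>u. borel_or_dihedral x (transvection u))"
  using borel_or_dihedral_involutions[OF assms] exists_transvection_not_borel_or_dihedral[OF assms]
  by auto

lemma eq_1_iff_borel_or_dihedral_all:
  fixes x :: "'a^2^2"
  assumes "det x = 1"
  shows "x = mat 1 \<longleftrightarrow> (\<forall>y. det y = 1 \<longrightarrow> borel_or_dihedral x y)"
proof
  assume all: "\<forall>y. det y = 1 \<longrightarrow> borel_or_dihedral x y"
  show "x = mat 1"
  proof (rule ccontr)
    assume "x \<noteq> mat 1"
    moreover have "trace x = 0"
      using all trace_eq_0_iff_borel_or_dihedral_transvections[OF assms] by simp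
    ultimately obtain u where "u \<noteq> 0" "x = transvection u"
      using involution_eq_transvection assms by metis
    then show False
      using all exists_not_borel_or_dihedral_with_transvection by metis
  qed
qed (simp add: borel_or_dihedral_one)

lemma commute_iff_offdiag_ratios_eq:
  fixes x x' :: "'a^2^2"
  assumes "trace x \<noteq> 0" "trace x' \<noteq> 0"
  shows "x ** x' = x' ** x \<longleftrightarrow>
    x$1$2 / trace x = x'$1$2 / trace x' \<and> x$2$1 / trace x = x'$2$1 / trace x'"
proof
  assume "x ** x' = x' ** x"
  then obtain \<alpha> \<beta> where x': "x' = mat \<alpha> ** x + mat \<beta>"
    using commute_nonscalar_imp_linear nonscalar_if_trace_ne_0[OF assms(1)] by blast
  then have "trace x' = \<alpha> * trace x"
    by (simp add: trace_linear)
  then show "x$1$2 / trace x = x'$1$2 / trace x' \<and> x$2$1 / trace x = x'$2$1 / trace x'"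
    using assms x' by (cases x rule: mat2_cases) (simp add: mat_eq_mat2)
next
  obtain a b c d where x: "x = mat2 a b c d"
    by (rule mat2_cases)
  obtain a' b' c' d' where x': "x' = mat2 a' b' c' d'"
    by (rule mat2_cases)
  assume ratios: "x$1$2 / trace x = x'$1$2 / trace x' \<and> x$2$1 / trace x = x'$2$1 / trace x'"
  define \<alpha> where "\<alpha> = trace x' / trace x"
  have "b' = \<alpha> * b" "c' = \<alpha> * c" "a' + d' = \<alpha> * (a + d)"
    using ratios assms by (simp_all add: \<alpha>_def x x' field_simps)
  then have "x' = mat \<alpha> ** x + mat (a' + \<alpha> * a)"
    by (simp add: x x' mat_eq_mat2 algebra_simps) (metis add_add_self add.commute add.left_commute)
  then show "x ** x' = x' ** x"
    using commute_linear[of 1 x 0 \<alpha> "a' + \<alpha> * a"] by simp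
qed

lemma involution_eq_iff:
  fixes x x' :: "'a^2^2"
  assumes "det x = 1" "det x' = 1" "trace x = 0" "trace x' = 0"
  shows "x = x' \<longleftrightarrow> x$1$2 = x'$1$2 \<and> x$2$1 = x'$2$1"
proof -
  obtain a b c d where x: "x = mat2 a b c d"
    by (rule mat2_cases)
  obtain a' b' c' d' where x': "x' = mat2 a' b' c' d'"
    by (rule mat2_cases)
  have "d = a" "d' = a'" "a * a = 1 + b * c" "a' * a' = 1 + b' * c'"
    using assms by (simp_all add: x x' add_eq_0_iff2) (metis add_add_self add.commute)+
  then show ?thesis
    by (auto simp: x x') (metis square_eq_square_iff)+
qed

lemma sol_class_eq_iff:
  fixes x x' :: "'a^2^2"
  assumes x: "det x = 1" and x': "det x' = 1"
  shows "sol_class x = sol_class x' \<longleftrightarrow>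
    (\<forall>y. det y = 1 \<longrightarrow> borel_or_dihedral x y = borel_or_dihedral x' y)"
proof
  assume same: "\<forall>y. det y = 1 \<longrightarrow> borel_or_dihedral x y = borel_or_dihedral x' y"
  have one: "x = mat 1 \<longleftrightarrow> x' = mat 1"
    using same eq_1_iff_borel_or_dihedral_all[OF x] eq_1_iff_borel_or_dihedral_all[OF x'] by auto
  have trace: "trace x = 0 \<longleftrightarrow> trace x' = 0"
    using same trace_eq_0_iff_borel_or_dihedral_transvections[OF x]
      trace_eq_0_iff_borel_or_dihedral_transvections[OF x'] by auto
  consider "x = mat 1" | "x \<noteq> mat 1" "trace x = 0" | "trace x \<noteq> 0"
    by blast
  then show "sol_class x = sol_class x'"
  proof cases
    case 2
    then obtain u u' where "u \<noteq> 0" "x = transvection u" "u' \<noteq> 0" "x' = transvection u'"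
      using one trace involution_eq_transvection x x' by metis
    then have "x = x'"
      using same exists_borel_or_dihedral_separating_transvections by metis
    then show ?thesis
      by simp
  next
    case 3
    then have "x ** x' = x' ** x"
      using commute_if_same_borel_or_dihedral[OF x _ x'] same trace by blast
    then show ?thesis
      using 3 one trace commute_iff_offdiag_ratios_eq[OF 3] by (auto simp: sol_class_def)
  qed (use one in \<open>simp add: sol_class_def\<close>)
next
  assume eq: "sol_class x = sol_class x'"
  consider "x = mat 1" "x' = mat 1" | "x = x'" | "trace x \<noteq> 0" "trace x' \<noteq> 0" "x ** x' = x' ** x"
    using eq involution_eq_iff[OF x x'] commute_iff_offdiag_ratios_eq
    by (auto simp: sol_class_def split: if_splits)
  then show "\<forall>y. det y = 1 \<longrightarrow> borel_or_dihedral x y = borel_or_dihedral x' y"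
    by cases (auto intro: borel_or_dihedral_if_commute_semisimple[OF x] borel_or_dihedral_if_commute_semisimple[OF x'])
qed

lemma exists_sol_class_Inr:
  obtains x :: "'a^2^2" where "det x = 1" "sol_class x = Some (Inr (b, c))"
proof -
  obtain s where s: "s * s + s + b * c \<noteq> 0"
  proof (cases "b * c = 0")
    case True
    obtain g :: 'a where "g \<noteq> 0" "g \<noteq> 1"
      by (rule exists_ne_0_1)
    then have "g * (g + 1) \<noteq> 0"
      by (auto simp: add_eq_0_iff2)
    then show ?thesis
      using that[of g] True by (simp add: algebra_simps)
  qed (use that[of 0] in simp)
  \<comment> \<open>The matrix with entries s, b, c, 1 + s has trace 1; rescale it to determinant 1.\<close>
  obtain r where r: "r * r = s * s + s + b * c"
    by (rule square_root)
  then have "r \<noteq> 0"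
    using s by auto
  let ?x = "mat2 (s / r) (b / r) (c / r) ((1 + s) / r)"
  have "det ?x = (s * s + s + b * c) / (r * r)"
    using \<open>r \<noteq> 0\<close> by (simp add: field_simps)
  then have "det ?x = 1"
    using r \<open>r \<noteq> 0\<close> s by simp
  moreover have "trace ?x = 1 / r"
    by (simp add: add_divide_distrib[symmetric] add.assoc[symmetric])
  then have "sol_class ?x = Some (Inr (b, c))"
    using \<open>r \<noteq> 0\<close> by (auto simp: sol_class_def mat_eq_mat2)
  ultimately show ?thesis
    using that by blast
qed

lemma sol_class_image:
  "sol_class ` {x :: 'a^2^2. det x = 1} =
     insert None (Some ` (Inl ` (UNIV - {(0, 0)}) \<union> Inr ` UNIV))"
proof (intro equalityI subsetI)
  fix k :: "('a \<times> 'a + 'a \<times> 'a) option"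
  assume "k \<in> sol_class ` {x. det x = 1}"
  then obtain x :: "'a^2^2" where x: "det x = 1" "k = sol_class x"
    by blast
  have "(x$1$2, x$2$1) \<noteq> (0, 0)" if "trace x = 0" "x \<noteq> mat 1"
    using that x(1) by (cases x rule: mat2_cases) (auto simp: mat_eq_mat2 add_eq_0_iff2)
  then show "k \<in> insert None (Some ` (Inl ` (UNIV - {(0, 0)}) \<union> Inr ` UNIV))"
    using x by (auto simp: sol_class_def)
next
  fix k :: "('a \<times> 'a + 'a \<times> 'a) option"
  assume "k \<in> insert None (Some ` (Inl ` (UNIV - {(0, 0)}) \<union> Inr ` UNIV))"
  then consider "k = None" | b c where "(b, c) \<noteq> (0, 0)" "k = Some (Inl (b, c))"
    | b c where "k = Some (Inr (b, c))"
    by auto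
  then show "k \<in> sol_class ` {x. det x = 1}"
  proof cases
    case 1
    then show ?thesis
      by (auto simp: sol_class_def image_iff intro!: exI[of _ "mat 1"])
  next
    case (2 b c)
    obtain a where "a * a = 1 + b * c"
      by (rule square_root)
    then have "det (mat2 a b c a) = 1" "sol_class (mat2 a b c a) = k"
      using 2 by (auto simp: sol_class_def mat_eq_mat2)
    then show ?thesis
      by (metis (mono_tags) image_eqI mem_Collect_eq)
  next
    case (3 b c)
    then show ?thesis
      using exists_sol_class_Inr by (metis (mono_tags) image_eqI mem_Collect_eq)
  qed
qed

lemma card_sol_class_image: "card (sol_class ` {x :: 'a^2^2. det x = 1}) = 2 * CARD('a) * CARD('a)"
proof -
  have pairs: "card (UNIV :: ('a \<times> 'a) set) = CARD('a) * CARD('a)"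
    by (simp add: UNIV_Times_UNIV[symmetric] card_cartesian_product del: UNIV_Times_UNIV)
  have "card (Inl ` (UNIV - {(0::'a, 0::'a)}) \<union> Inr ` (UNIV :: ('a \<times> 'a) set))
      = (CARD('a) * CARD('a) - 1) + CARD('a) * CARD('a)"
    by (subst card_Un_disjoint) (auto simp: card_image pairs card_Diff_singleton)
  moreover have "CARD('a) * CARD('a) \<ge> 1"
    by (simp add: Suc_le_eq)
  ultimately show ?thesis
    by (simp add: sol_class_image card_insert_if card_image)
qed

lemma card_Solv_SL2: "card (Solv (SL2 TYPE('a))) = 2 * CARD('a) * CARD('a)"
proof -
  have "Solv (SL2 TYPE('a)) = Sol (SL2 TYPE('a)) ` {x. det x = 1}"
    by (simp add: Solv_def)
  moreover have "Sol (SL2 TYPE('a)) x = Sol (SL2 TYPE('a)) x' \<longleftrightarrow> sol_class x = sol_class x'"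
    if "det x = 1" "det x' = 1" for x x' :: "'a^2^2"
    using that by (auto simp: Sol_SL2 sol_class_eq_iff set_eq_iff)
  ultimately show ?thesis
    using card_image_eq_if_same_fibres[of "{x. det x = 1}" "Sol (SL2 TYPE('a))" sol_class]
      card_sol_class_image by simp
qed

lemma card_Solv_PSL2: "card (Solv (PSL2 TYPE('a))) = 2 * CARD('a) * CARD('a)"
proof -
  have "SL2_scalars TYPE('a) = {\<one>\<^bsub>SL2 TYPE('a)\<^esub>}"
    using scalar_det_1 by (auto simp: SL2_scalars_def det_I)
  then have PSL2: "PSL2 TYPE('a) = SL2 TYPE('a) Mod {\<one>\<^bsub>SL2 TYPE('a)\<^esub>}"
    by (simp add: PSL2_def)
  note SL2 = group_SL2[where 'a = 'a]
  have "group (PSL2 TYPE('a))"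
    unfolding PSL2 by (rule normal.factorgroup_is_group[OF group.one_is_normal[OF SL2]])
  then show ?thesis
    using card_Solv_iso[OF _ SL2 group.trivial_factor_iso[OF SL2]] card_Solv_SL2
    by (simp add: PSL2)
qed

end

lemma two_eq_0_if_card_power_of_2:
  assumes "CARD('a::{field,finite}) = 2 ^ n"
  shows "(2::'a) = 0"
proof -
  have "CHAR('a) dvd 2 ^ n"
    using CHAR_dvd_CARD[where 'a = 'a] assms by simp
  then obtain i where i: "CHAR('a) = 2 ^ i"
    using divides_primepow_nat[OF two_is_prime_nat] by blast
  have "(2::'a) ^ i = 0"
    using i of_nat_CHAR[where 'a = 'a] by (metis of_nat_numeral of_nat_power)
  then show ?thesis
    by simp
qed

theorem theorem3p7:
  fixes p :: nat
  assumes "prime p"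
    and "CARD('a::{field,finite}) = 2 ^ p"
  shows "card (Solv (PSL2 TYPE('a))) = 2 * (2 ^ p) ^ 2"
proof -
  \<comment> \<open>Primality of p is only used to get a field with more than two elements.\<close>
  have "(2::nat) ^ 2 \<le> 2 ^ p"
    using prime_ge_2_nat[OF assms(1)] by (rule power_increasing) simp
  then interpret char2_finite "TYPE('a)"
    using two_eq_0_if_card_power_of_2[OF assms(2)] assms(2) by unfold_locales simp_all
  show ?thesis
    using card_Solv_PSL2 assms(2) by (simp add: power2_eq_square)
qed

end
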